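(* Let $r\ge2$, $f:\{\pm1\}^r\to\{0,1\}$, $\alpha>0$, $d=r\alpha$, and $\alpha'=\lceil (d+\sqrt d\log d)/r\rceil$. Let $\mathcal I\sim\mathrm{CSP}_f(\alpha)$ on $n$ variables and run the removal phase. Then there is $c>0$ such that, with probability tending to $1$ as $n\to\infty$, the number of removed clauses is at most $n\cdot O_d(d^{-c\log d})$.
   Context: Random CSP $\mathrm{CSP}_f(\alpha)$: on variables $x_1,\dots,x_n$, with $m=\alpha n$ clauses; for each clause independently draw indices $i_1,\dots,i_r$ uniformly i.i.d. from $[n]$ and signs uniformly i.i.d. from $\{\pm1\}$, the clause being $f(\epsilon_1x_{i_1},\dots,\epsilon_rx_{i_r})$. For a variable $v$ and $\iota\in[r]$, $\deg(v,\iota)$ is the number of clauses whose $\iota$-th index is $v$. Removal phase: while there is a pair $(v,\iota)$ with $\deg(v,\iota)>\alpha'$, pick such a pair and delete an arbitrary clause in which $v$ appears at index $\iota$. $O_d(g(d))$ denotes a quantity bounded by $C\,g(d)$ with $C$ independent of $d$ and $n$. *)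

theory Defs
  imports "HOL-Probability.Probability"
begin

text \<open>A clause is a list of r literals (variable index in {0..<n}, sign; True = +1, False = -1).
  An instance is a list of m clauses; the predicate f is common to all clauses and
  plays no role in the removal phase.\<close>

type_synonym clause = "(nat \<times> bool) list"

definition csp_instances :: "nat \<Rightarrow> nat \<Rightarrow> nat \<Rightarrow> clause list set" where
  "csp_instances r n m =
     {cs. length cs = m \<and> (\<forall>c\<in>set cs. length c = r \<and> (\<forall>p\<in>set c. fst p < n))}"

text \<open>Uniform distribution over instances = i.i.d. uniform indices and signs; m = floor(alpha n).\<close>
definition random_csp :: "nat \<Rightarrow> nat \<Rightarrow> real \<Rightarrow> clause list pmf" where
  "random_csp r n \<alpha> = pmf_of_set (csp_instances r n (nat \<lfloor>\<alpha> * real n\<rfloor>))"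

definition deg :: "clause list \<Rightarrow> nat set \<Rightarrow> nat \<Rightarrow> nat \<Rightarrow> nat" where
  "deg cs S v \<iota> = card {j\<in>S. fst (cs ! j ! \<iota>) = v}"

definition removal_step :: "nat \<Rightarrow> int \<Rightarrow> clause list \<Rightarrow> nat set \<Rightarrow> nat set \<Rightarrow> bool" where
  "removal_step r a' cs S S' \<longleftrightarrow>
     (\<exists>j \<iota>. j \<in> S \<and> \<iota> < r \<and> int (deg cs S (fst (cs ! j ! \<iota>)) \<iota>) > a' \<and> S' = S - {j})"

definition removal_terminal :: "nat \<Rightarrow> int \<Rightarrow> clause list \<Rightarrow> nat set \<Rightarrow> bool" where
  "removal_terminal r a' cs S \<longleftrightarrow> (\<forall>v \<iota>. \<iota> < r \<longrightarrow> int (deg cs S v \<iota>) \<le> a')"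

definition removal_outcome :: "nat \<Rightarrow> int \<Rightarrow> clause list \<Rightarrow> nat set \<Rightarrow> bool" where
  "removal_outcome r a' cs S \<longleftrightarrow>
     (removal_step r a' cs)\<^sup>*\<^sup>* {0..<length cs} S \<and> removal_terminal r a' cs S"

definition alpha' :: "nat \<Rightarrow> real \<Rightarrow> int" where
  "alpha' r \<alpha> = (let d = real r * \<alpha> in \<lceil>(d + sqrt d * ln d) / real r\<rceil>)"

end

theory Submission
  imports Defs
begin

text \<open>Every deletion of the removal phase lowers the potential
  \<open>\<Sum>\<^sub>v\<^sub>,\<^sub>\<iota> max 0 (deg(v, \<iota>) - \<alpha>')\<close> by at least one, so at most the total excess X of the
  initial degrees over \<alpha>' is removed. An initial degree is binomial with mean at most \<alpha>, and its
  exponential moment at rate \<open>ln d / (2 sqrt d)\<close> bounds its expected excess over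
  \<open>\<alpha>' \<ge> \<alpha> + sqrt d ln d / r\<close> by \<open>2 exp (- (ln d)\<^sup>2 / (8 r)) = 2 d powr (- ln d / (8 r))\<close>; hence
  \<open>E X \<le> 2 r n d powr (- ln d / (8 r))\<close>. Replacing one clause changes X by at most 2 r, so by
  the Efron-Stein inequality \<open>Var X \<le> 4 r\<^sup>2 \<alpha> n\<close>, and by Chebyshev's inequality X exceeds its
  mean by \<open>n d powr (- ln d / (8 r))\<close> with probability only O(1/n).\<close>

section \<open>Uniform random lists\<close>

definition lists_of_len :: "'a set \<Rightarrow> nat \<Rightarrow> 'a list set" where
  "lists_of_len K m = {xs. set xs \<subseteq> K \<and> length xs = m}"

lemma finite_lists_of_len: "finite K \<Longrightarrow> finite (lists_of_len K m)"
  unfolding lists_of_len_def by (rule finite_lists_length_eq)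

lemma card_lists_of_len: "finite K \<Longrightarrow> card (lists_of_len K m) = card K ^ m"
  unfolding lists_of_len_def by (rule card_lists_length_eq)

lemma lists_of_len_0 [simp]: "lists_of_len K 0 = {[]}"
  unfolding lists_of_len_def by auto

lemma lists_of_len_Suc: "lists_of_len K (Suc m) = (\<lambda>(a, xs). a # xs) ` (K \<times> lists_of_len K m)"
proof
  show "lists_of_len K (Suc m) \<subseteq> (\<lambda>(a, xs). a # xs) ` (K \<times> lists_of_len K m)"
  proof
    fix ys assume "ys \<in> lists_of_len K (Suc m)"
    then obtain a xs where "ys = a # xs" "a \<in> K" "xs \<in> lists_of_len K m"
      unfolding lists_of_len_def by (cases ys) auto
    then show "ys \<in> (\<lambda>(a, xs). a # xs) ` (K \<times> lists_of_len K m)" by force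
  qed
qed (auto simp: lists_of_len_def)

lemma sum_lists_of_len_Suc:
  assumes "finite K"
  shows "(\<Sum>ys\<in>lists_of_len K (Suc m). G ys) = (\<Sum>a\<in>K. \<Sum>xs\<in>lists_of_len K m. G (a # xs))"
proof -
  have "inj_on (\<lambda>(a, xs). a # xs) (K \<times> lists_of_len K m)" by (auto simp: inj_on_def)
  then have "(\<Sum>ys\<in>lists_of_len K (Suc m). G ys) = (\<Sum>p\<in>K \<times> lists_of_len K m. G ((\<lambda>(a, xs). a # xs) p))"
    unfolding lists_of_len_Suc by (rule sum.reindex[unfolded comp_def])
  also have "\<dots> = (\<Sum>a\<in>K. \<Sum>xs\<in>lists_of_len K m. G (a # xs))"
    by (simp add: sum.cartesian_product split_def)
  finally show ?thesis .
qed

lemma sum_lists_of_len_prod_list: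
  fixes g :: "'a \<Rightarrow> real"
  assumes "finite K"
  shows "(\<Sum>xs\<in>lists_of_len K m. prod_list (map g xs)) = sum g K ^ m"
  by (induction m)
    (simp_all add: sum_lists_of_len_Suc[OF assms] sum_distrib_left[symmetric] sum_distrib_right[symmetric])

lemma sum_lists_of_len_nth:
  fixes g :: "'a \<Rightarrow> real"
  assumes "finite K" "i < m"
  shows "(\<Sum>xs\<in>lists_of_len K m. g (xs ! i)) = real (card K) ^ (m - 1) * sum g K"
  using assms(2)
proof (induction m arbitrary: i)
  case 0
  then show ?case by simp
next
  case (Suc m)
  show ?case
  proof (cases i)
    case 0
    then show ?thesis
      by (simp add: sum_lists_of_len_Suc[OF assms(1)] card_lists_of_len[OF assms(1)]
          sum_distrib_right mult.commute)
  next
    case (Suc i')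
    with Suc.prems have "i' < m" by simp
    then have "Suc (m - 1) = m" by simp
    then have "real (card K) * real (card K) ^ (m - 1) = real (card K) ^ m"
      by (metis power_Suc)
    with Suc.IH[OF \<open>i' < m\<close>] \<open>i = Suc i'\<close> show ?thesis
      by (simp add: sum_lists_of_len_Suc[OF assms(1)] mult.assoc[symmetric])
  qed
qed

lemma sum_square_deviation_shift:
  fixes g :: "'a \<Rightarrow> real" and \<mu> \<kappa> :: real
  assumes "finite A" "A \<noteq> {}"
  defines "\<mu> \<equiv> sum g A / card A"
  shows "(\<Sum>x\<in>A. (g x - \<kappa>)\<^sup>2) = (\<Sum>x\<in>A. (g x - \<mu>)\<^sup>2) + card A * (\<mu> - \<kappa>)\<^sup>2"
proof -
  have centred: "(\<Sum>x\<in>A. g x - \<mu>) = 0"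
    using assms by (simp add: sum_subtractf \<mu>_def)
  have "(\<Sum>x\<in>A. (g x - \<kappa>)\<^sup>2)
      = (\<Sum>x\<in>A. (g x - \<mu>)\<^sup>2 + 2 * (\<mu> - \<kappa>) * (g x - \<mu>) + (\<mu> - \<kappa>)\<^sup>2)"
    by (rule sum.cong) (auto simp: power2_eq_square algebra_simps)
  also have "\<dots> = (\<Sum>x\<in>A. (g x - \<mu>)\<^sup>2) + 2 * (\<mu> - \<kappa>) * (\<Sum>x\<in>A. g x - \<mu>) + card A * (\<mu> - \<kappa>)\<^sup>2"
    by (simp add: sum.distrib sum_distrib_left)
  finally show ?thesis
    unfolding centred by simp
qed

text \<open>The Efron-Stein inequality for the uniform distribution on \<open>K\<^sup>m\<close>, by induction on m,
  splitting the variance along the first coordinate.\<close>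
lemma sum_square_deviation_bounded_differences:
  fixes F :: "'a list \<Rightarrow> real" and c :: real
  assumes K: "finite K" "K \<noteq> {}"
    and bd: "\<And>xs ys a b. set xs \<subseteq> K \<Longrightarrow> set ys \<subseteq> K \<Longrightarrow> a \<in> K \<Longrightarrow> b \<in> K \<Longrightarrow>
               length xs + length ys + 1 = m \<Longrightarrow> \<bar>F (xs @ a # ys) - F (xs @ b # ys)\<bar> \<le> c"
  shows "(\<Sum>xs\<in>lists_of_len K m.
            (F xs - (\<Sum>ys\<in>lists_of_len K m. F ys) / card (lists_of_len K m))\<^sup>2)
         \<le> card (lists_of_len K m) * m * c\<^sup>2"
  using bd
proof (induction m arbitrary: F)
  case 0
  then show ?case by simp
next
  case (Suc m)
  define N where "N = card (lists_of_len K m)"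
  have N_pos: "N > 0"
    unfolding N_def using K by (simp add: card_lists_of_len card_gt_0_iff)
  define h where "h a = (\<Sum>xs\<in>lists_of_len K m. F (a # xs)) / N" for a
  define \<mu> where "\<mu> = (\<Sum>ys\<in>lists_of_len K (Suc m). F ys) / card (lists_of_len K (Suc m))"
  have card_Suc: "card (lists_of_len K (Suc m)) = card K * N"
    unfolding N_def using K by (simp add: card_lists_of_len)
  have \<mu>_eq: "\<mu> = sum h K / card K"
    unfolding \<mu>_def h_def card_Suc using N_pos
    by (simp add: sum_lists_of_len_Suc[OF K(1)] sum_divide_distrib[symmetric] field_simps)
  have fibre: "(\<Sum>xs\<in>lists_of_len K m. (F (a # xs) - h a)\<^sup>2) \<le> N * m * c\<^sup>2" if "a \<in> K" for a
    unfolding h_def N_def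
  proof (rule Suc.IH)
    fix xs ys a' b'
    assume "set xs \<subseteq> K" "set ys \<subseteq> K" "a' \<in> K" "b' \<in> K" "length xs + length ys + 1 = m"
    then show "\<bar>F (a # xs @ a' # ys) - F (a # xs @ b' # ys)\<bar> \<le> c"
      using Suc.prems[of "a # xs" ys a' b'] that by simp
  qed
  have h_diff: "(h a - h b)\<^sup>2 \<le> c\<^sup>2" if "a \<in> K" "b \<in> K" for a b
  proof -
    have "\<bar>\<Sum>xs\<in>lists_of_len K m. F (a # xs) - F (b # xs)\<bar>
        \<le> (\<Sum>xs\<in>lists_of_len K m. \<bar>F (a # xs) - F (b # xs)\<bar>)"
      by (rule sum_abs)
    also have "\<dots> \<le> (\<Sum>xs\<in>lists_of_len K m. c)"
      by (rule sum_mono) (use Suc.prems[of "[]" _ a b] that in \<open>auto simp: lists_of_len_def\<close>)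
    also have "\<dots> = N * c" unfolding N_def by simp
    finally have sum_le: "\<bar>\<Sum>xs\<in>lists_of_len K m. F (a # xs) - F (b # xs)\<bar> \<le> N * c" .
    have "h a - h b = (\<Sum>xs\<in>lists_of_len K m. F (a # xs) - F (b # xs)) / N"
      unfolding h_def by (simp add: sum_subtractf diff_divide_distrib)
    then have "\<bar>h a - h b\<bar> \<le> c"
      using sum_le N_pos by (simp add: abs_divide divide_le_eq mult.commute)
    then show ?thesis
      using power_mono[OF _ abs_ge_zero, of _ c 2] by simp
  qed
  obtain b where b: "b \<in> K" using K by auto
  have "(\<Sum>ys\<in>lists_of_len K (Suc m). (F ys - \<mu>)\<^sup>2)
      = (\<Sum>a\<in>K. (\<Sum>xs\<in>lists_of_len K m. (F (a # xs) - h a)\<^sup>2) + N * (h a - \<mu>)\<^sup>2)"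
    unfolding sum_lists_of_len_Suc[OF K(1)]
  proof (rule sum.cong[OF refl])
    fix a
    have "lists_of_len K m \<noteq> {}" using N_pos unfolding N_def by auto
    then show "(\<Sum>xs\<in>lists_of_len K m. (F (a # xs) - \<mu>)\<^sup>2)
        = (\<Sum>xs\<in>lists_of_len K m. (F (a # xs) - h a)\<^sup>2) + N * (h a - \<mu>)\<^sup>2"
      using sum_square_deviation_shift[OF finite_lists_of_len[OF K(1)], of m "\<lambda>xs. F (a # xs)" \<mu>]
      unfolding h_def N_def by simp
  qed
  also have "\<dots> = (\<Sum>a\<in>K. \<Sum>xs\<in>lists_of_len K m. (F (a # xs) - h a)\<^sup>2) + N * (\<Sum>a\<in>K. (h a - \<mu>)\<^sup>2)"
    by (simp add: sum.distrib sum_distrib_left)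
  also have "\<dots> \<le> (\<Sum>a\<in>K. N * m * c\<^sup>2) + N * (\<Sum>a\<in>K. (h a - h b)\<^sup>2)"
  proof (rule add_mono)
    show "(\<Sum>a\<in>K. \<Sum>xs\<in>lists_of_len K m. (F (a # xs) - h a)\<^sup>2) \<le> (\<Sum>a\<in>K. N * m * c\<^sup>2)"
      by (rule sum_mono) (rule fibre)
    have "(\<Sum>a\<in>K. (h a - \<mu>)\<^sup>2) \<le> (\<Sum>a\<in>K. (h a - h b)\<^sup>2)"
      using sum_square_deviation_shift[OF K, of h "h b"] \<mu>_eq by simp
    then show "N * (\<Sum>a\<in>K. (h a - \<mu>)\<^sup>2) \<le> N * (\<Sum>a\<in>K. (h a - h b)\<^sup>2)"
      by (simp add: mult_left_mono)
  qed
  also have "\<dots> \<le> (\<Sum>a\<in>K. N * m * c\<^sup>2) + N * (\<Sum>a\<in>K. c\<^sup>2)"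
    using h_diff[OF _ b] by (intro add_left_mono mult_left_mono sum_mono) auto
  also have "\<dots> = card (lists_of_len K (Suc m)) * Suc m * c\<^sup>2"
    unfolding card_Suc by (simp add: algebra_simps)
  finally show ?case unfolding \<mu>_def .
qed

lemma measure_pmf_of_set_Chebyshev:
  fixes X :: "'a \<Rightarrow> real" and t V :: real
  assumes A: "finite A" "A \<noteq> {}" and t: "t > 0"
    and var: "(\<Sum>x\<in>A. (X x - (\<Sum>y\<in>A. X y) / card A)\<^sup>2) \<le> card A * V"
    and E: "\<And>x. x \<in> A \<Longrightarrow> X x \<le> (\<Sum>y\<in>A. X y) / card A + t \<Longrightarrow> x \<in> E"
  shows "1 - V / t\<^sup>2 \<le> measure_pmf.prob (pmf_of_set A) E"
proof -
  define \<mu> where "\<mu> = (\<Sum>y\<in>A. X y) / card A"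
  define Bad where "Bad = {x\<in>A. X x > \<mu> + t}"
  have card_A: "card A > 0" using A by (simp add: card_gt_0_iff)
  have "card Bad * t\<^sup>2 = (\<Sum>x\<in>Bad. t\<^sup>2)" by simp
  also have "\<dots> \<le> (\<Sum>x\<in>Bad. (X x - \<mu>)\<^sup>2)"
    by (rule sum_mono) (use t in \<open>auto simp: Bad_def intro!: power_mono\<close>)
  also have "\<dots> \<le> (\<Sum>x\<in>A. (X x - \<mu>)\<^sup>2)"
    by (rule sum_mono2) (use A(1) in \<open>auto simp: Bad_def\<close>)
  finally have "card Bad * t\<^sup>2 \<le> card A * V"
    using var unfolding \<mu>_def by linarith
  then have Bad_frac: "card Bad / card A \<le> V / t\<^sup>2"
    using card_A t by (simp add: divide_le_eq le_divide_eq mult.commute)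
  have "A - Bad \<subseteq> A \<inter> E"
  proof
    fix x assume "x \<in> A - Bad"
    then show "x \<in> A \<inter> E" using E[of x] unfolding Bad_def \<mu>_def by auto
  qed
  then have "real (card A) - card Bad \<le> card (A \<inter> E)"
    using A(1) card_mono[of "A \<inter> E" "A - Bad"]
    by (simp add: Bad_def card_Diff_subset card_mono)
  then have "1 - card Bad / card A \<le> card (A \<inter> E) / card A"
    using card_A by (simp add: le_divide_eq algebra_simps)
  then show ?thesis
    using Bad_frac measure_pmf_of_set[OF A(2,1)] by simp
qed

section \<open>The removal phase\<close>

definition excess :: "real \<Rightarrow> nat \<Rightarrow> real" where
  "excess a k = max 0 (real k - a)"

definition occurrences :: "clause list \<Rightarrow> nat \<Rightarrow> nat \<Rightarrow> nat" where
  "occurrences cs v \<iota> = length (filter (\<lambda>c. fst (c ! \<iota>) = v) cs)"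

definition total_excess :: "nat \<Rightarrow> nat \<Rightarrow> real \<Rightarrow> clause list \<Rightarrow> real" where
  "total_excess r n a cs = (\<Sum>v<n. \<Sum>\<iota><r. excess a (occurrences cs v \<iota>))"

definition excess_potential :: "nat \<Rightarrow> nat \<Rightarrow> real \<Rightarrow> clause list \<Rightarrow> nat set \<Rightarrow> real" where
  "excess_potential r n a cs S = (\<Sum>v<n. \<Sum>\<iota><r. excess a (deg cs S v \<iota>))"

lemma excess_nonneg: "excess a k \<ge> 0"
  unfolding excess_def by simp

lemma excess_mono: "k \<le> l \<Longrightarrow> excess a k \<le> excess a l"
  unfolding excess_def by auto

lemma excess_Lipschitz: "\<bar>excess a k - excess a l\<bar> \<le> \<bar>real k - real l\<bar>"
  unfolding excess_def by auto

lemma deg_mono: "S' \<subseteq> S \<Longrightarrow> finite S \<Longrightarrow> deg cs S' v \<iota> \<le> deg cs S v \<iota>"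
  unfolding deg_def by (rule card_mono) auto

lemma deg_all: "deg cs {0..<length cs} v \<iota> = occurrences cs v \<iota>"
  unfolding deg_def occurrences_def length_filter_conv_card by (rule arg_cong[where f = card]) auto

lemma sum_plus_one_le_sum:
  fixes g h :: "'a \<Rightarrow> real"
  assumes "finite A" "x \<in> A" "\<And>y. y \<in> A \<Longrightarrow> g y \<le> h y" "g x + 1 \<le> h x"
  shows "sum g A + 1 \<le> sum h A"
proof -
  have "sum g (A - {x}) \<le> sum h (A - {x})"
    using assms(3) by (intro sum_mono) auto
  then show ?thesis
    using sum.remove[OF assms(1,2), of g] sum.remove[OF assms(1,2), of h] assms(4) by linarith
qed

lemma removal_step_remove:
  assumes "removal_step r a' cs S S'"
  obtains j where "j \<in> S" "S' = S - {j}"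
  using assms unfolding removal_step_def by blast

lemma excess_potential_removal_step:
  assumes cs: "\<forall>c\<in>set cs. length c = r \<and> (\<forall>p\<in>set c. fst p < n)"
    and S: "S \<subseteq> {0..<length cs}" and step: "removal_step r a' cs S S'"
  shows "excess_potential r n (real_of_int a') cs S' + 1 \<le> excess_potential r n (real_of_int a') cs S"
proof -
  let ?a = "real_of_int a'"
  from step obtain j \<iota>0 where j: "j \<in> S" "\<iota>0 < r" and S': "S' = S - {j}"
    and overfull: "int (deg cs S (fst (cs ! j ! \<iota>0)) \<iota>0) > a'"
    unfolding removal_step_def by blast
  define v0 where "v0 = fst (cs ! j ! \<iota>0)"
  have fin: "finite S" using S finite_subset by blast
  have "cs ! j \<in> set cs" using j S by auto
  then have v0: "v0 < n" unfolding v0_def using cs j(2) by auto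
  have S'S: "S' \<subseteq> S" using S' by auto
  have "{i\<in>S. fst (cs ! i ! \<iota>0) = v0} = insert j {i\<in>S'. fst (cs ! i ! \<iota>0) = v0}"
    using S' j v0_def by auto
  then have deg_drop: "deg cs S' v0 \<iota>0 + 1 = deg cs S v0 \<iota>0"
    unfolding deg_def using S' fin by simp
  have "(\<Sum>\<iota><r. excess ?a (deg cs S' v0 \<iota>)) + 1 \<le> (\<Sum>\<iota><r. excess ?a (deg cs S v0 \<iota>))"
  proof (rule sum_plus_one_le_sum)
    show "excess ?a (deg cs S' v0 \<iota>0) + 1 \<le> excess ?a (deg cs S v0 \<iota>0)"
      using overfull deg_drop unfolding excess_def v0_def[symmetric] by auto
  qed (use j in \<open>auto intro: excess_mono deg_mono[OF S'S fin]\<close>)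
  then show ?thesis
    unfolding excess_potential_def
    by (rule sum_plus_one_le_sum[rotated 3])
      (use v0 in \<open>auto intro!: sum_mono excess_mono deg_mono[OF S'S fin]\<close>)
qed

lemma removal_steps_excess_potential:
  assumes cs: "\<forall>c\<in>set cs. length c = r \<and> (\<forall>p\<in>set c. fst p < n)"
    and steps: "(removal_step r a' cs)\<^sup>*\<^sup>* {0..<length cs} S"
  shows "S \<subseteq> {0..<length cs} \<and> real (length cs - card S) + excess_potential r n (real_of_int a') cs S
           \<le> excess_potential r n (real_of_int a') cs {0..<length cs}"
  using steps
proof (induction rule: rtranclp_induct)
  case base
  then show ?case by simp
next
  case (step S S')
  then have S: "S \<subseteq> {0..<length cs}" by simp
  obtain j where j: "j \<in> S" "S' = S - {j}"
    using step.hyps(2) by (rule removal_step_remove)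
  have fin: "finite S" using S finite_subset by blast
  then have "card S' + 1 = card S"
    using j by (simp add: card_Diff_singleton) (metis card_0_eq empty_iff Suc_pred neq0_conv)
  moreover have "card S \<le> length cs"
    using card_mono[OF _ S] by simp
  ultimately have "real (length cs - card S') = real (length cs - card S) + 1" by simp
  with step.IH excess_potential_removal_step[OF cs S step.hyps(2)] j S show ?case by auto
qed

lemma removed_clauses_le_total_excess:
  assumes cs: "\<forall>c\<in>set cs. length c = r \<and> (\<forall>p\<in>set c. fst p < n)"
    and "removal_outcome r a' cs S"
  shows "real (length cs - card S) \<le> total_excess r n (real_of_int a') cs"
proof -
  have "real (length cs - card S) + excess_potential r n (real_of_int a') cs S
      \<le> excess_potential r n (real_of_int a') cs {0..<length cs}"
    using removal_steps_excess_potential[OF cs] assms(2) unfolding removal_outcome_def by blast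
  moreover have "excess_potential r n (real_of_int a') cs S \<ge> 0"
    unfolding excess_potential_def by (intro sum_nonneg excess_nonneg)
  moreover have "excess_potential r n (real_of_int a') cs {0..<length cs} = total_excess r n (real_of_int a') cs"
    unfolding excess_potential_def total_excess_def deg_all ..
  ultimately show ?thesis by linarith
qed

section \<open>Degrees of a random instance\<close>

definition literals :: "nat \<Rightarrow> (nat \<times> bool) set" where
  "literals n = {0..<n} \<times> UNIV"

definition clauses :: "nat \<Rightarrow> nat \<Rightarrow> clause set" where
  "clauses r n = lists_of_len (literals n) r"

lemma finite_literals: "finite (literals n)"
  unfolding literals_def by simp

lemma card_literals: "card (literals n) = 2 * n"
  unfolding literals_def by (simp add: card_cartesian_product)

lemma finite_clauses: "finite (clauses r n)"
  unfolding clauses_def by (rule finite_lists_of_len[OF finite_literals])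

lemma clauses_eq: "clauses r n = {c. length c = r \<and> (\<forall>p\<in>set c. fst p < n)}"
  unfolding clauses_def lists_of_len_def literals_def by (auto simp: mem_Times_iff)

lemma clauses_nonempty:
  assumes "n > 0"
  shows "clauses r n \<noteq> {}"
proof -
  have "replicate r (0, True) \<in> clauses r n"
    unfolding clauses_eq using assms by auto
  then show ?thesis by auto
qed

lemma csp_instances_eq: "csp_instances r n m = lists_of_len (clauses r n) m"
  unfolding csp_instances_def lists_of_len_def clauses_eq by auto

lemma exp_mult_length_filter:
  "exp (l * real (length (filter P cs))) = prod_list (map (\<lambda>c. if P c then exp l else 1) cs)"
  by (induction cs) (auto simp: distrib_left exp_add)

lemma sum_literals_weight:
  assumes "v < n"
  shows "(\<Sum>x\<in>literals n. if fst x = v then e else 1) = 2 * (real n - 1 + e)"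
proof -
  have "(\<Sum>x\<in>literals n. if fst x = v then e else 1)
      = (\<Sum>i\<in>{0..<n}. \<Sum>b\<in>(UNIV::bool set). if i = v then e else 1)"
    unfolding literals_def sum.cartesian_product by (simp add: split_def)
  also have "\<dots> = (\<Sum>i\<in>{0..<n}. 2 * (1 + (if v = i then e - 1 else 0)))"
    by (rule sum.cong) (auto simp: UNIV_bool)
  also have "\<dots> = 2 * (real n + (e - 1))"
    using assms by (simp add: sum_distrib_left[symmetric] sum.distrib)
  finally show ?thesis by simp
qed

lemma sum_clauses_weight:
  assumes "v < n" "\<iota> < r"
  shows "(\<Sum>c\<in>clauses r n. if fst (c ! \<iota>) = v then e else 1) = card (clauses r n) * (1 + (e - 1) / n)"
proof -
  have "(\<Sum>c\<in>clauses r n. if fst (c ! \<iota>) = v then e else 1) = real (2 * n) ^ (r - 1) * (2 * (real n - 1 + e))"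
    unfolding clauses_def
    using sum_lists_of_len_nth[OF finite_literals assms(2), of "\<lambda>x. if fst x = v then e else 1"]
    by (simp add: sum_literals_weight[OF assms(1)] card_literals)
  also have "\<dots> = real (2 * n) ^ (r - 1) * (2 * n) * (1 + (e - 1) / n)"
    using assms by (simp add: field_simps)
  also have "real (2 * n) ^ (r - 1) * (2 * n) = card (clauses r n)"
    unfolding clauses_def card_lists_of_len[OF finite_literals] card_literals using assms(2)
    by (simp add: power_Suc2[symmetric] del: of_nat_mult)
  finally show ?thesis .
qed

text \<open>From \<open>x \<le> exp (x - 1)\<close> at \<open>x = l (k - a)\<close>.\<close>
lemma excess_le_exp:
  assumes "l > 0"
  shows "excess a k \<le> exp (l * real k) * (exp (- l * a - 1) / l)"
proof -
  have "l * (real k - a) \<le> exp (l * (real k - a) - 1)"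
    using exp_ge_add_one_self[of "l * (real k - a) - 1"] by simp
  then have "real k - a \<le> exp (l * (real k - a) - 1) / l"
    using assms by (simp add: field_simps)
  moreover have "exp (l * (real k - a) - 1) = exp (l * real k) * exp (- l * a - 1)"
    by (simp add: exp_add[symmetric] algebra_simps)
  ultimately show ?thesis
    unfolding excess_def using assms by auto
qed

lemma sum_excess_occurrences_le:
  assumes "v < n" "\<iota> < r" "l > 0"
  shows "(\<Sum>cs\<in>csp_instances r n m. excess a (occurrences cs v \<iota>))
     \<le> card (csp_instances r n m) * (exp (- l * a - 1) / l * exp ((exp l - 1) * m / n))"
proof -
  let ?w = "\<lambda>c::clause. if fst (c ! \<iota>) = v then exp l else 1"
  let ?M = "exp (- l * a - 1) / l"
  let ?K = "real (card (clauses r n))"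
  have "(\<Sum>cs\<in>csp_instances r n m. excess a (occurrences cs v \<iota>))
      \<le> (\<Sum>cs\<in>csp_instances r n m. exp (l * real (occurrences cs v \<iota>)) * ?M)"
    by (rule sum_mono) (rule excess_le_exp[OF assms(3)])
  also have "\<dots> = (\<Sum>cs\<in>lists_of_len (clauses r n) m. prod_list (map ?w cs)) * ?M"
    unfolding csp_instances_eq occurrences_def exp_mult_length_filter sum_distrib_right ..
  also have "\<dots> = (?K * (1 + (exp l - 1) / n)) ^ m * ?M"
    unfolding sum_lists_of_len_prod_list[OF finite_clauses] sum_clauses_weight[OF assms(1,2)] ..
  also have "\<dots> \<le> (?K * exp ((exp l - 1) / n)) ^ m * ?M"
  proof -
    have "0 \<le> 1 + (exp l - 1) / n" using assms by simp
    then show ?thesis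
      using assms(3) by (intro mult_right_mono power_mono mult_left_mono exp_ge_add_one_self) auto
  qed
  also have "\<dots> = card (csp_instances r n m) * (?M * exp ((exp l - 1) * m / n))"
    unfolding csp_instances_eq card_lists_of_len[OF finite_clauses] power_mult_distrib
      exp_of_nat_mult[symmetric]
    by (simp add: field_simps)
  finally show ?thesis .
qed

lemma occurrences_append_Cons:
  "occurrences (xs @ c # ys) v \<iota> = occurrences xs v \<iota> + (if fst (c ! \<iota>) = v then 1 else 0) + occurrences ys v \<iota>"
  unfolding occurrences_def by simp

lemma excess_occurrences_replace_le:
  "\<bar>excess a (occurrences (xs @ c # ys) v \<iota>) - excess a (occurrences (xs @ c' # ys) v \<iota>)\<bar>
     \<le> of_bool (fst (c ! \<iota>) = v) + of_bool (fst (c' ! \<iota>) = v)"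
  using excess_Lipschitz[of a "occurrences (xs @ c # ys) v \<iota>" "occurrences (xs @ c' # ys) v \<iota>"]
  unfolding occurrences_append_Cons by (cases "fst (c ! \<iota>) = v"; cases "fst (c' ! \<iota>) = v") auto

lemma total_excess_bounded_difference:
  "\<bar>total_excess r n a (xs @ c # ys) - total_excess r n a (xs @ c' # ys)\<bar> \<le> 2 * real r"
proof -
  let ?hit = "\<lambda>c v \<iota>. of_bool (fst (c ! \<iota>) = v) :: real"
  have hits: "(\<Sum>v<n. ?hit c v \<iota>) \<le> 1" for c \<iota>
    unfolding of_bool_def eq_commute[of "fst (c ! \<iota>)"] by simp
  have "\<bar>total_excess r n a (xs @ c # ys) - total_excess r n a (xs @ c' # ys)\<bar>
      \<le> (\<Sum>v<n. \<Sum>\<iota><r. \<bar>excess a (occurrences (xs @ c # ys) v \<iota>) - excess a (occurrences (xs @ c' # ys) v \<iota>)\<bar>)"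
    unfolding total_excess_def sum_subtractf[symmetric]
    by (rule order.trans[OF sum_abs sum_mono[OF sum_abs]])
  also have "\<dots> \<le> (\<Sum>v<n. \<Sum>\<iota><r. ?hit c v \<iota> + ?hit c' v \<iota>)"
    by (intro sum_mono excess_occurrences_replace_le)
  also have "\<dots> = (\<Sum>\<iota><r. (\<Sum>v<n. ?hit c v \<iota>) + (\<Sum>v<n. ?hit c' v \<iota>))"
    by (subst sum.swap) (simp add: sum.distrib)
  also have "\<dots> \<le> (\<Sum>\<iota><r. 1 + 1)"
    by (intro sum_mono add_mono hits)
  also have "\<dots> = 2 * real r" by simp
  finally show ?thesis .
qed

section \<open>The Chernoff estimate\<close>

lemma sqrt_eq_exp_half_ln: "x > 0 \<Longrightarrow> sqrt x = exp (ln x / 2)"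
  by (simp add: powr_half_sqrt[symmetric] powr_def)

lemma Chernoff_rate_bounds:
  fixes d :: real
  assumes "d > 1"
  shows "0 < ln d / (2 * sqrt d)" "ln d / (2 * sqrt d) \<le> 1"
proof -
  have sqrt_d: "sqrt d = exp (ln d / 2)"
    using assms by (simp add: sqrt_eq_exp_half_ln)
  show "0 < ln d / (2 * sqrt d)" using assms by simp
  have "ln d / 2 \<le> exp (ln d / 2)"
    using exp_ge_add_one_self[of "ln d / 2"] by linarith
  then show "ln d / (2 * sqrt d) \<le> 1"
    unfolding sqrt_d by (simp add: field_simps)
qed

lemma Chernoff_exponent_le:
  fixes r :: nat and \<alpha> a q :: real
  assumes r: "r > 0" and d: "real r * \<alpha> > 1"
    and a: "a \<ge> \<alpha> + sqrt (real r * \<alpha>) * ln (real r * \<alpha>) / real r"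
    and q: "0 \<le> q" "q \<le> \<alpha>"
  defines "l \<equiv> ln (real r * \<alpha>) / (2 * sqrt (real r * \<alpha>))"
  shows "- l * a + (exp l - 1) * q \<le> - (ln (real r * \<alpha>))\<^sup>2 / (4 * real r)"
proof -
  define d where "d = real r * \<alpha>"
  define L where "L = ln d"
  define s where "s = sqrt d"
  have "0 < real r * \<alpha>" using d by linarith
  then have \<alpha>_pos: "\<alpha> > 0" by (simp add: zero_less_mult_iff)
  have s_pos: "s > 0" and s_sq: "s * s = d"
    unfolding s_def using d d_def by auto
  have l_eq: "l = L / (2 * s)" unfolding l_def L_def s_def d_def ..
  have l: "0 < l" "l \<le> 1"
    using Chernoff_rate_bounds[OF d] unfolding l_def by auto
  have "(exp l - 1) * q \<le> (l + l\<^sup>2) * \<alpha>"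
    using exp_bound[of l] l q by (intro mult_mono) auto
  moreover have "- l * a \<le> - l * (\<alpha> + s * L / real r)"
    using a l unfolding s_def L_def d_def by simp
  moreover have "l\<^sup>2 * \<alpha> = L\<^sup>2 / (4 * real r)"
    unfolding l_eq power2_eq_square using s_pos r \<alpha>_pos s_sq d_def by (simp add: field_simps)
  moreover have "l * (s * L / real r) = L\<^sup>2 / (2 * real r)"
    unfolding l_eq power2_eq_square using s_pos r by (simp add: field_simps)
  ultimately show ?thesis
    unfolding L_def d_def by (simp add: algebra_simps)
qed

text \<open>Applied below with q = m / n, the mean of a degree; the rate l is chosen so that the
  exponent drops to \<open>- (ln d)\<^sup>2 / (4 r)\<close>.\<close>
lemma Chernoff_bound:
  fixes r :: nat and \<alpha> a q :: real
  assumes r: "r > 0" and d: "exp (4 * real r) \<le> real r * \<alpha>"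
    and a: "a \<ge> \<alpha> + sqrt (real r * \<alpha>) * ln (real r * \<alpha>) / real r"
    and q: "0 \<le> q" "q \<le> \<alpha>"
  defines "l \<equiv> ln (real r * \<alpha>) / (2 * sqrt (real r * \<alpha>))"
  shows "exp (- l * a - 1) / l * exp ((exp l - 1) * q) \<le> 2 * exp (- (ln (real r * \<alpha>))\<^sup>2 / (8 * real r))"
proof -
  define L where "L = ln (real r * \<alpha>)"
  have d1: "real r * \<alpha> > 1"
    using d r by (smt (verit) exp_gt_one of_nat_0_less_iff)
  have "4 * real r = ln (exp (4 * real r))" by simp
  also have "\<dots> \<le> L"
    unfolding L_def using d d1 by (subst ln_le_cancel_iff) auto
  finally have L: "L \<ge> 4 * real r" .
  have L1: "L \<ge> 1" using L r by linarith
  have sqrt_d: "sqrt (real r * \<alpha>) = exp (L / 2)"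
    unfolding L_def using d1 by (intro sqrt_eq_exp_half_ln) linarith
  have l_pos: "l > 0" using Chernoff_rate_bounds(1)[OF d1] unfolding l_def .
  have half: "L / 2 \<le> L\<^sup>2 / (8 * real r)"
    using L r L1 by (simp add: field_simps power2_eq_square mult_left_mono)
  define g where "g = exp (- L\<^sup>2 / (8 * real r))"
  have "exp (- l * a - 1) / l * exp ((exp l - 1) * q) = exp (- l * a + (exp l - 1) * q) * exp (- 1) / l"
    by (simp add: mult_exp_exp)
  also have "\<dots> \<le> exp (- L\<^sup>2 / (4 * real r)) * exp (- 1) / l"
    using Chernoff_exponent_le[OF r d1 a q] l_pos unfolding l_def L_def
    by (intro divide_right_mono mult_right_mono) auto
  also have "exp (- L\<^sup>2 / (4 * real r)) = g * g"
  proof -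
    have "- L\<^sup>2 / (4 * real r) = - L\<^sup>2 / (8 * real r) + - L\<^sup>2 / (8 * real r)"
      using r by (simp add: field_simps)
    then show ?thesis unfolding g_def by (simp add: mult_exp_exp)
  qed
  also have "g * g * exp (- 1) / l = 2 * g * ((exp (L / 2) * g) * (exp (- 1) / L))"
    unfolding l_def sqrt_d L_def[symmetric] using L1 by (simp add: field_simps)
  also have "\<dots> \<le> 2 * g * (1 * 1)"
  proof (intro mult_left_mono mult_mono)
    have "exp (L / 2) * g = exp (L / 2 - L\<^sup>2 / (8 * real r))"
      unfolding g_def by (simp add: mult_exp_exp)
    then show "exp (L / 2) * g \<le> 1" using half by simp
    show "exp (- 1) / L \<le> 1"
      using L1 by (simp add: divide_le_eq) (metis exp_le_one_iff neg_le_0_iff_le zero_le_one order.trans)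
  qed (use L1 in \<open>auto simp: g_def\<close>)
  finally show ?thesis unfolding g_def L_def by simp
qed

lemma alpha'_ge:
  assumes "r > 0"
  shows "\<alpha> + sqrt (real r * \<alpha>) * ln (real r * \<alpha>) / real r \<le> real_of_int (alpha' r \<alpha>)"
proof -
  have "(real r * \<alpha> + sqrt (real r * \<alpha>) * ln (real r * \<alpha>)) / real r \<le> real_of_int (alpha' r \<alpha>)"
    unfolding alpha'_def Let_def by linarith
  then show ?thesis
    using assms by (simp add: add_divide_distrib)
qed

section \<open>Concentration of the total excess\<close>

lemma sum_total_excess_le:
  fixes r n m :: nat and \<alpha> :: real
  assumes r: "r > 0" and d: "exp (4 * real r) \<le> real r * \<alpha>" and n: "n > 0"
    and m: "real m \<le> \<alpha> * real n"
  shows "(\<Sum>cs\<in>csp_instances r n m. total_excess r n (alpha' r \<alpha>) cs)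
    \<le> card (csp_instances r n m) * (2 * real r * real n * exp (- (ln (real r * \<alpha>))\<^sup>2 / (8 * real r)))"
proof -
  define a where "a = real_of_int (alpha' r \<alpha>)"
  define l where "l = ln (real r * \<alpha>) / (2 * sqrt (real r * \<alpha>))"
  define g where "g = exp (- (ln (real r * \<alpha>))\<^sup>2 / (8 * real r))"
  let ?A = "csp_instances r n m"
  have d1: "real r * \<alpha> > 1"
    using d r by (smt (verit) exp_gt_one of_nat_0_less_iff)
  then have \<alpha>: "\<alpha> > 0"
    using zero_less_mult_pos[of "real r" \<alpha>] r by simp
  have l: "l > 0"
    unfolding l_def by (rule Chernoff_rate_bounds(1)[OF d1])
  have pair: "exp (- l * a - 1) / l * exp ((exp l - 1) * real m / real n) \<le> 2 * g"
    using Chernoff_bound[OF r d alpha'_ge[OF r], of "real m / real n"] m n \<alpha>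
    unfolding l_def a_def g_def by (simp add: pos_divide_le_eq)
  have "(\<Sum>cs\<in>?A. total_excess r n a cs) = (\<Sum>v<n. \<Sum>\<iota><r. \<Sum>cs\<in>?A. excess a (occurrences cs v \<iota>))"
    unfolding total_excess_def by (subst sum.swap, subst (2) sum.swap) simp
  also have "\<dots> \<le> (\<Sum>v<n. \<Sum>\<iota><r. card ?A * (2 * g))"
  proof (intro sum_mono)
    fix v \<iota> assume "v \<in> {..<n}" "\<iota> \<in> {..<r}"
    then have "(\<Sum>cs\<in>?A. excess a (occurrences cs v \<iota>))
        \<le> card ?A * (exp (- l * a - 1) / l * exp ((exp l - 1) * real m / real n))"
      using l by (intro sum_excess_occurrences_le) auto
    also have "\<dots> \<le> card ?A * (2 * g)"
      using pair by (intro mult_left_mono) auto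
    finally show "(\<Sum>cs\<in>?A. excess a (occurrences cs v \<iota>)) \<le> card ?A * (2 * g)" .
  qed
  also have "\<dots> = card ?A * (2 * real r * real n * g)" by simp
  finally show ?thesis unfolding a_def g_def .
qed

lemma prob_removed_clauses_le:
  fixes r n :: nat and \<alpha> :: real
  assumes r: "r > 0" and d: "exp (4 * real r) \<le> real r * \<alpha>" and n: "n > 0"
  defines "g \<equiv> exp (- (ln (real r * \<alpha>))\<^sup>2 / (8 * real r))"
  shows "1 - 4 * \<alpha> * (real r / g)\<^sup>2 / real n \<le> measure_pmf.prob (random_csp r n \<alpha>)
    {cs. \<forall>S. removal_outcome r (alpha' r \<alpha>) cs S \<longrightarrow> real (length cs - card S) \<le> (2 * real r + 1) * real n * g}"
proof -
  define m where "m = nat \<lfloor>\<alpha> * real n\<rfloor>"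
  define A where "A = csp_instances r n m"
  define X where "X = total_excess r n (alpha' r \<alpha>)"
  have "real r * \<alpha> > 0"
    using d exp_gt_zero[of "4 * real r"] by linarith
  then have \<alpha>: "\<alpha> > 0"
    using zero_less_mult_pos[of "real r" \<alpha>] r by simp
  have m: "real m \<le> \<alpha> * real n"
    unfolding m_def using \<alpha> n by simp
  have "card A > 0"
    unfolding A_def csp_instances_eq card_lists_of_len[OF finite_clauses]
    using clauses_nonempty[OF n] finite_clauses by (simp add: card_gt_0_iff)
  then have A: "finite A" "A \<noteq> {}" by (auto simp: card_gt_0_iff)
  have g: "g > 0" unfolding g_def by simp
  have mean: "(\<Sum>cs\<in>A. X cs) / card A \<le> 2 * real r * real n * g"
    using sum_total_excess_le[OF r d n m] A unfolding A_def X_def g_def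
    by (simp add: pos_divide_le_eq card_gt_0_iff mult.commute)
  have "(\<Sum>cs\<in>A. (X cs - (\<Sum>cs\<in>A. X cs) / card A)\<^sup>2) \<le> card A * m * (2 * real r)\<^sup>2"
    unfolding A_def X_def csp_instances_eq
    using A(2)[unfolded A_def csp_instances_eq] clauses_nonempty[OF n]
    by (intro sum_square_deviation_bounded_differences finite_clauses total_excess_bounded_difference)
  also have "\<dots> \<le> card A * (\<alpha> * real n) * (2 * real r)\<^sup>2"
    using mult_left_mono[OF m, of "real (card A)"] by (intro mult_right_mono) simp_all
  finally have var: "(\<Sum>cs\<in>A. (X cs - (\<Sum>cs\<in>A. X cs) / card A)\<^sup>2) \<le> card A * (\<alpha> * real n * (2 * real r)\<^sup>2)"
    by (simp add: mult.assoc)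
  have "1 - \<alpha> * real n * (2 * real r)\<^sup>2 / (real n * g)\<^sup>2 \<le> measure_pmf.prob (pmf_of_set A)
    {cs. \<forall>S. removal_outcome r (alpha' r \<alpha>) cs S \<longrightarrow> real (length cs - card S) \<le> (2 * real r + 1) * real n * g}"
  proof (rule measure_pmf_of_set_Chebyshev[OF A _ var], safe)
    show "real n * g > 0" using n g by simp
    fix cs S
    assume cs: "cs \<in> A" "X cs \<le> (\<Sum>cs\<in>A. X cs) / card A + real n * g"
      and S: "removal_outcome r (alpha' r \<alpha>) cs S"
    have "\<forall>c\<in>set cs. length c = r \<and> (\<forall>p\<in>set c. fst p < n)"
      using cs(1) unfolding A_def csp_instances_def by auto
    from removed_clauses_le_total_excess[OF this S]
    show "real (length cs - card S) \<le> (2 * real r + 1) * real n * g"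
      using cs(2) mean unfolding X_def by (simp add: algebra_simps)
  qed
  moreover have "\<alpha> * real n * (2 * real r)\<^sup>2 / (real n * g)\<^sup>2 = 4 * \<alpha> * (real r / g)\<^sup>2 / real n"
    using n g by (simp add: field_simps power2_eq_square)
  ultimately show ?thesis
    unfolding random_csp_def m_def[symmetric] A_def[symmetric] by simp
qed

lemma tendsto_prob_removed_clauses_le:
  fixes r :: nat and \<alpha> :: real
  assumes r: "r > 0" and d: "exp (4 * real r) \<le> real r * \<alpha>"
  defines "g \<equiv> exp (- (ln (real r * \<alpha>))\<^sup>2 / (8 * real r))"
  shows "(\<lambda>n. measure_pmf.prob (random_csp r n \<alpha>)
      {cs. \<forall>S. removal_outcome r (alpha' r \<alpha>) cs S \<longrightarrow> real (length cs - card S) \<le> (2 * real r + 1) * real n * g})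
    \<longlonglongrightarrow> 1" (is "?P \<longlonglongrightarrow> 1")
proof (rule tendsto_sandwich[where f = "\<lambda>n. 1 - 4 * \<alpha> * (real r / g)\<^sup>2 / real n" and h = "\<lambda>_. 1"])
  show "\<forall>\<^sub>F n in sequentially. 1 - 4 * \<alpha> * (real r / g)\<^sup>2 / real n \<le> ?P n"
    using eventually_gt_at_top[of 0] unfolding g_def
    by eventually_elim (rule prob_removed_clauses_le[OF r d])
  show "\<forall>\<^sub>F n in sequentially. ?P n \<le> 1"
    by (simp add: measure_pmf.prob_le_1)
  have "(\<lambda>n. 4 * \<alpha> * (real r / g)\<^sup>2 / real n) \<longlonglongrightarrow> 0"
    by (intro tendsto_divide_0[OF tendsto_const] filterlim_at_top_imp_at_infinity
        filterlim_real_sequentially)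
  then show "(\<lambda>n. 1 - 4 * \<alpha> * (real r / g)\<^sup>2 / real n) \<longlonglongrightarrow> 1"
    using tendsto_diff[OF tendsto_const[of 1]] by fastforce
qed simp

theorem mainTheorem19:
  fixes r :: nat and f :: "int list \<Rightarrow> nat"
  assumes "r \<ge> 2" and "\<forall>x. f x \<in> {0, 1}"
  shows "\<exists>c>0. \<exists>C>0. \<exists>d0. \<forall>\<alpha>>0. real r * \<alpha> \<ge> d0 \<longrightarrow>
    (\<lambda>n. measure_pmf.prob (random_csp r n \<alpha>)
        {cs. \<forall>S. removal_outcome r (alpha' r \<alpha>) cs S \<longrightarrow>
              real (length cs - card S) \<le> C * real n * (real r * \<alpha>) powr (- c * ln (real r * \<alpha>))})
    \<longlonglongrightarrow> 1"
proof -
  have r: "r > 0" using assms(1) by simp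
  have "\<forall>\<alpha>>0. exp (4 * real r) \<le> real r * \<alpha> \<longrightarrow>
    (\<lambda>n. measure_pmf.prob (random_csp r n \<alpha>)
        {cs. \<forall>S. removal_outcome r (alpha' r \<alpha>) cs S \<longrightarrow> real (length cs - card S)
               \<le> (2 * real r + 1) * real n * (real r * \<alpha>) powr (- (1 / (8 * real r)) * ln (real r * \<alpha>))})
    \<longlonglongrightarrow> 1"
  proof (intro allI impI)
    fix \<alpha> :: real
    assume "\<alpha> > 0" and d: "exp (4 * real r) \<le> real r * \<alpha>"
    then have "(real r * \<alpha>) powr (- (1 / (8 * real r)) * ln (real r * \<alpha>))
        = exp (- (ln (real r * \<alpha>))\<^sup>2 / (8 * real r))"
      using r by (simp add: powr_def power2_eq_square)
    with tendsto_prob_removed_clauses_le[OF r d] show "(\<lambda>n. measure_pmf.prob (random_csp r n \<alpha>)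
        {cs. \<forall>S. removal_outcome r (alpha' r \<alpha>) cs S \<longrightarrow> real (length cs - card S)
               \<le> (2 * real r + 1) * real n * (real r * \<alpha>) powr (- (1 / (8 * real r)) * ln (real r * \<alpha>))})
      \<longlonglongrightarrow> 1" by simp
  qed
  moreover have "1 / (8 * real r) > 0" "2 * real r + 1 > 0" using r by auto
  ultimately show ?thesis by blast
qed

end
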